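(* Assume the setting, majorant assumptions and constants of the context. Let $x_k$ be an iterate of the INL-CondG method with $x_k\in C\cap B(x_*,\sigma)\setminus\{x_*\}$ and $F(x_k)\neq0$, where the invertible matrix $M_k$ satisfies $\|M_k^{-1}F'(x_k)\|\le\omega_1$, $\|M_k^{-1}F'(x_k)-I\|\le\omega_2$, and for some invertible $P_k$ and scalar $\eta_k$ the residual satisfies $\|P_kr_k\|\le\eta_k\|P_kF(x_k)\|$ and $0\le\eta_k\,\mathrm{cond}(P_kF'(x_k))\le\vartheta$; let $\theta_k\ge0$ and $x_{k+1}=\mathrm{CondG}(y_k,x_k,\theta_k\|s_k\|^2)$. Then $$\|x_{k+1}-x_*\|\le\omega_1(1+\vartheta)(1+\sqrt{2\theta_k})|n_f(\|x_k-x_*\|)|+\big(\omega_1[(1+\vartheta)\sqrt{2\theta_k}+\vartheta]+\omega_2\big)\|x_k-x_*\|,$$ where $n_f(t)=t-f(t)/f'(t)$. If moreover $\theta_k\le\lambda^2/2$, then $\|x_{k+1}-x_*\|<\|x_k-x_*\|$.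
   Context: Setting: $\Omega\subset\mathbb{R}^n$ is open, $F:\Omega\to\mathbb{R}^n$ is continuously differentiable with Jacobian $F'(x)$, $C\subset\Omega$ is a nonempty convex compact set, and $x_*\in C$ satisfies $F(x_* )=0$ with $F'(x_* )$ nonsingular. $\|\cdot\|$ is the Euclidean norm on $\mathbb{R}^n$ and the induced operator norm on matrices; $B(a,\delta)$ is the open ball of center $a$ and radius $\delta$; $\mathrm{cond}(A)=\|A^{-1}\|\|A\|$. Majorant assumptions: $R>0$, $\kappa:=\sup\{t\in[0,R): B(x_*,t)\subset\Omega\}$, and $f:[0,R)\to\mathbb{R}$ is continuously differentiable with $$\|F'(x_* )^{-1}[F'(x)-F'(x_*+\tau(x-x_* ))]\|\le f'(\|x-x_*\|)-f'(\tau\|x-x_*\|)\quad\text{for all }\tau\in[0,1],\ x\in B(x_*,\kappa),$$ (h1) $f(0)=0$, $f'(0)=-1$; (h2) $f'$ is strictly increasing. Constants: $0\le\vartheta<1$, $0\le\omega_2<\omega_1$, $\omega_1\vartheta+\omega_2<1$, $\lambda\in[0,(1-\omega_2-\omega_1\vartheta)/(\omega_1(1+\vartheta)))$; $\nu:=\sup\{t\in[0,R): f'(t)<0\}$; $\rho:=\sup\{\delta\in(0,\nu): \omega_1(1+\vartheta)(1+\lambda)\big(\tfrac{f(t)}{tf'(t)}-1\big)+\omega_1[(1+\vartheta)\lambda+\vartheta]+\omega_2<1 \text{ for all } t\in(0,\delta)\}$; $\sigma:=\min\{\kappa,\rho\}$. CondG procedure $z=\mathrm{CondG}(y,x,\varepsilon)$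 (for $y\in\mathbb{R}^n$, $x\in C$, $\varepsilon\ge0$): set $z_1=x$, $t=1$. (P1) Compute an optimal solution $u_t$ of $g_t^*=\min_{u\in C}\langle z_t-y,u-z_t\rangle$. (P2) If $g_t^*\ge-\varepsilon$, set $z=z_t$ and stop; otherwise set $\alpha_t=\min\{1,-g_t^*/\|u_t-z_t\|^2\}$, $z_{t+1}=z_t+\alpha_t(u_t-z_t)$, $t\leftarrow t+1$ and go to (P1). INL-CondG method: given $x_0\in C$ and $\{\theta_j\}\subset[0,\infty)$, for $k=0,1,\dots$: if $F(x_k)=0$ stop; otherwise choose an invertible matrix $M_k$ (approximating $F'(x_k)$) and compute $(s_k,r_k,y_k)$ with $M_ks_k=-F(x_k)+r_k$, $y_k=x_k+s_k$; then set $x_{k+1}=\mathrm{CondG}(y_k,x_k,\theta_k\|s_k\|^2)$. *)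

theory Defs
  imports "HOL-Analysis.Analysis"
begin

definition mat_norm :: "real^'n^'n \<Rightarrow> real" where
  "mat_norm A = onorm (\<lambda>v. A *v v)"

definition cond_num :: "real^'n^'n \<Rightarrow> real" where
  "cond_num A = mat_norm (matrix_inv A) * mat_norm A"

definition newton_fun :: "(real \<Rightarrow> real) \<Rightarrow> (real \<Rightarrow> real) \<Rightarrow> real \<Rightarrow> real" where
  "newton_fun f df t = t - f t / df t"

definition cg_obj :: "real^'n \<Rightarrow> real^'n \<Rightarrow> real^'n \<Rightarrow> real" where
  "cg_obj y z u = inner (z - y) (u - z)"

text \<open>z is a possible output of the procedure CondG(y, x, eps) over the set C:
  there is a run z_1 = x, ..., z_T with chosen optimal solutions u_1, ..., u_T of (P1),
  where the stopping test fails for t < T and succeeds at t = T, and z = z_T.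
  (The optimal solution u_t is not unique in general, hence a relation.)\<close>
definition CondG_output :: "(real^'n) set \<Rightarrow> real^'n \<Rightarrow> real^'n \<Rightarrow> real \<Rightarrow> real^'n \<Rightarrow> bool" where
  "CondG_output C y x eps z \<longleftrightarrow>
     (\<exists>T::nat. \<exists>zs us :: nat \<Rightarrow> real^'n.
        1 \<le> T \<and> zs 1 = x \<and>
        (\<forall>t\<in>{1..T}. us t \<in> C \<and> (\<forall>v\<in>C. cg_obj y (zs t) (us t) \<le> cg_obj y (zs t) v)) \<and>
        (\<forall>t\<in>{1..<T}. cg_obj y (zs t) (us t) < - eps \<and>
            zs (t + 1) = zs t + min 1 (- cg_obj y (zs t) (us t) / (norm (us t - zs t))\<^sup>2)
                                    *\<^sub>R (us t - zs t)) \<and>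
        cg_obj y (zs T) (us T) \<ge> - eps \<and>
        z = zs T)"

end

theory Submission
  imports Defs
begin

text \<open>Let \<open>t = |x - xs|\<close> and let \<open>u = F'(x)\<^sup>-\<^sup>1 F(x)\<close> be the exact Newton step. The majorant
  \<open>f\<close> controls \<open>F\<close> near \<open>xs\<close>: the Banach lemma gives \<open>|F'(xs)\<^sup>-\<^sup>1 F'(x) v| \<ge> -f'(t) |v|\<close>,
  and the mean value inequality bounds the linearization error by \<open>t f'(t) - f(t)\<close>, so
  \<open>|x - xs - u| \<le> |n\<^sub>f(t)|\<close>. With \<open>Q = M\<^sup>-\<^sup>1 F'(x)\<close> the inexact step is
  \<open>s = Q (F'(x)\<^sup>-\<^sup>1 r - u)\<close>, and the residual condition gives \<open>|F'(x)\<^sup>-\<^sup>1 r| \<le> \<vartheta> |u|\<close>;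
  this bounds both \<open>|y - xs|\<close> and \<open>|s|\<close>. Since \<open>xs \<in> C\<close>, the stopping test of CondG puts
  \<open>x'\<close> at most \<open>\<surd>\<theta> |s|\<close> farther from \<open>xs\<close> than \<open>y\<close>. The radius \<open>\<rho>\<close> is defined precisely so
  that the resulting bound is below \<open>t\<close> once \<open>\<theta> \<le> \<lambda>\<^sup>2/2\<close>.\<close>


lemma mat_norm_bound: "norm (A *v v) \<le> mat_norm A * norm v" for A :: "real^'n^'n"
  unfolding mat_norm_def by (rule onorm[OF matrix_vector_mul_bounded_linear])

lemma mat_norm_nonneg: "0 \<le> mat_norm A" for A :: "real^'n^'n"
  unfolding mat_norm_def by (rule onorm_pos_le[OF matrix_vector_mul_bounded_linear])

lemma mat_norm_le_imp_norm_le: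
  fixes A :: "real^'n^'n"
  assumes "mat_norm A \<le> c"
  shows "norm (A *v v) \<le> c * norm v"
  using mat_norm_bound[of A v] assms by (meson mult_right_mono norm_ge_zero order_trans)

lemma matrix_inv_right: "invertible A \<Longrightarrow> A ** matrix_inv A = mat 1"
  and matrix_inv_left: "invertible A \<Longrightarrow> matrix_inv A ** A = mat 1"
  for A :: "'a::semiring_1^'n^'n"
  unfolding invertible_def matrix_inv_def by (metis (mono_tags, lifting) someI_ex)+

lemma matrix_inv_mult_cancel:
  fixes A :: "'a::semiring_1^'n^'n"
  assumes "invertible A"
  shows "A *v (matrix_inv A *v v) = v" "matrix_inv A *v (A *v v) = v"
  by (simp_all add: matrix_vector_mul_assoc matrix_inv_right matrix_inv_left assms)

lemma cond_num_ge_1: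
  fixes A :: "real^'n^'n"
  assumes "invertible A"
  shows "1 \<le> cond_num A"
proof -
  have "1 = onorm (\<lambda>v::real^'n. (matrix_inv A ** A) *v v)"
    using onorm_id by (simp add: matrix_inv_left assms)
  also have "\<dots> = onorm ((\<lambda>v. matrix_inv A *v v) \<circ> (\<lambda>v. A *v v))"
    by (simp add: o_def matrix_vector_mul_assoc)
  also have "\<dots> \<le> cond_num A"
    unfolding cond_num_def mat_norm_def by (intro onorm_compose matrix_vector_mul_bounded_linear)
  finally show ?thesis .
qed

lemma CondG_output_gap:
  fixes z :: "real^'n"
  assumes "CondG_output C y x eps z" "v \<in> C"
  shows "- eps \<le> inner (z - y) (v - z)"
proof -
  obtain T :: nat and zs us :: "nat \<Rightarrow> real^'n" where T: "1 \<le> T"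
    and opt: "\<forall>t\<in>{1..T}. us t \<in> C \<and> (\<forall>v\<in>C. cg_obj y (zs t) (us t) \<le> cg_obj y (zs t) v)"
    and stop: "- eps \<le> cg_obj y (zs T) (us T)" and z: "z = zs T"
    using assms(1) unfolding CondG_output_def by (elim exE conjE) blast
  have "cg_obj y z (us T) \<le> cg_obj y z v" using opt T assms(2) z by auto
  with stop z show ?thesis unfolding cg_obj_def by simp
qed

text \<open>Expanding \<open>|z - p|\<^sup>2\<close> and Cauchy-Schwarz give \<open>|z - p|\<^sup>2 \<le> eps + |y - p| |z - p|\<close>.\<close>
lemma dist_le_of_approx_projection:
  fixes y z p :: "'a::real_inner"
  assumes gap: "- eps \<le> inner (z - y) (p - z)" and "0 \<le> eps"
  shows "norm (z - p) \<le> norm (y - p) + sqrt eps"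
proof -
  define a b where "a = norm (z - p)" and "b = norm (y - p)"
  have "a\<^sup>2 = - inner (z - y) (p - z) + inner (y - p) (z - p)"
    unfolding a_def by (simp add: power2_norm_eq_inner algebra_simps inner_commute)
  also have "inner (y - p) (z - p) \<le> b * a"
    unfolding a_def b_def by (rule norm_cauchy_schwarz)
  finally have key: "a\<^sup>2 \<le> eps + b * a" using gap by linarith
  show ?thesis
  proof (rule ccontr)
    assume "\<not> ?thesis"
    hence lt: "b + sqrt eps < a" unfolding a_def b_def by simp
    have "b \<ge> 0" unfolding b_def by simp
    have "eps + b * a = sqrt eps * sqrt eps + b * a" using \<open>0 \<le> eps\<close> by simp
    also have "\<dots> \<le> a * sqrt eps + b * a"
      using lt \<open>b \<ge> 0\<close> \<open>0 \<le> eps\<close> by (intro add_right_mono mult_right_mono) auto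
    also have "\<dots> = a * (b + sqrt eps)" by (simp add: algebra_simps)
    also have "\<dots> < a * a"
      using lt \<open>b \<ge> 0\<close> \<open>0 \<le> eps\<close> real_sqrt_ge_zero[of eps] by (intro mult_strict_left_mono) linarith+
    finally show False using key by (simp add: power2_eq_square)
  qed
qed

lemma CondG_output_dist_le:
  assumes "CondG_output C y x eps z" "p \<in> C" "0 \<le> eps"
  shows "norm (z - p) \<le> norm (y - p) + sqrt eps"
  using dist_le_of_approx_projection CondG_output_gap[OF assms(1,2)] assms(3) by blast

lemma linearization_error_has_vector_derivative:
  fixes F :: "real^'n \<Rightarrow> real^'n" and K A D :: "real^'n^'n"
  assumes "(F has_derivative (\<lambda>h. D *v h)) (at (a + \<tau> *\<^sub>R e))"
  shows "((\<lambda>\<tau>. K *v (F (a + \<tau> *\<^sub>R e) - \<tau> *\<^sub>R (A *v e))) has_vector_derivative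
           K *v (D *v e - A *v e)) (at \<tau>)"
proof -
  have "((\<lambda>\<tau>. a + \<tau> *\<^sub>R e) has_derivative (\<lambda>h. h *\<^sub>R e)) (at \<tau>)"
    by (auto intro!: derivative_eq_intros)
  from has_derivative_compose[OF this assms]
  have "((\<lambda>\<tau>. F (a + \<tau> *\<^sub>R e) - \<tau> *\<^sub>R (A *v e)) has_derivative
          (\<lambda>h. D *v (h *\<^sub>R e) - h *\<^sub>R (A *v e))) (at \<tau>)"
    by (auto intro!: derivative_eq_intros)
  from bounded_linear.has_derivative[OF matrix_vector_mul_bounded_linear this, of K]
  show ?thesis
    unfolding has_vector_derivative_def
    by (simp add: matrix_vector_mult_scaleR algebra_simps)
qed

lemma has_real_derivative_scaled_argument:
  fixes f df :: "real \<Rightarrow> real"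
  assumes f_deriv: "\<And>s. s \<in> {0..<R} \<Longrightarrow> (f has_real_derivative df s) (at s within {0..<R})"
    and "0 < \<tau> * t" "\<tau> * t < R"
  shows "((\<lambda>\<tau>. f (\<tau> * t)) has_real_derivative df (\<tau> * t) * t) (at \<tau>)"
proof -
  have "\<tau> * t \<in> interior {0..<R}" using assms(2,3) by simp
  hence "(f has_real_derivative df (\<tau> * t)) (at (\<tau> * t))"
    using f_deriv[of "\<tau> * t"] assms(2,3) at_within_interior by fastforce
  thus ?thesis by (rule DERIV_chain2[where g="\<lambda>\<tau>. \<tau> * t"]) (auto intro!: derivative_eq_intros)
qed

text \<open>Mean value inequality on \<open>[0, 1]\<close>: by the majorant condition the derivative of
  \<open>\<tau> \<mapsto> K (F (a + \<tau> e) - \<tau> F'(x) e)\<close> is dominated by that of \<open>\<tau> \<mapsto> \<tau> t f'(t) - f (\<tau> t)\<close>.\<close>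
lemma majorant_linearization_bound:
  fixes F :: "real^'n \<Rightarrow> real^'n" and F' :: "real^'n \<Rightarrow> real^'n^'n" and K :: "real^'n^'n"
    and f df :: "real \<Rightarrow> real"
  assumes t: "t = norm (x - a)" "0 < t" "t < R"
    and F_deriv: "\<And>\<tau>. \<tau> \<in> {0..1} \<Longrightarrow>
      (F has_derivative (\<lambda>h. F' (a + \<tau> *\<^sub>R (x - a)) *v h)) (at (a + \<tau> *\<^sub>R (x - a)))"
    and f_deriv: "\<And>s. s \<in> {0..<R} \<Longrightarrow> (f has_real_derivative df s) (at s within {0..<R})"
    and f0: "f 0 = 0"
    and majorant: "\<And>\<tau>. \<tau> \<in> {0..1} \<Longrightarrow>
      mat_norm (K ** (F' x - F' (a + \<tau> *\<^sub>R (x - a)))) \<le> df t - df (\<tau> * t)"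
  shows "norm (K *v (F x - F a - F' x *v (x - a))) \<le> t * df t - f t"
proof -
  define e where "e = x - a"
  define G where "G \<tau> = K *v (F (a + \<tau> *\<^sub>R e) - \<tau> *\<^sub>R (F' x *v e))" for \<tau>
  define G' where "G' \<tau> = K *v (F' (a + \<tau> *\<^sub>R e) *v e - F' x *v e)" for \<tau>
  define \<phi> where "\<phi> \<tau> = \<tau> * t * df t - f (\<tau> * t)" for \<tau>
  have scaled: "0 < \<tau> * t" "\<tau> * t < R" if "\<tau> \<in> {0<..<1}" for \<tau>
  proof -
    have "\<tau> * t < 1 * t" using that t(2) by (intro mult_strict_right_mono) auto
    thus "\<tau> * t < R" using t(3) by linarith
    show "0 < \<tau> * t" using that t(2) by simp
  qed
  have G_deriv: "(G has_vector_derivative G' \<tau>) (at \<tau>)" if "\<tau> \<in> {0..1}" for \<tau>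
    unfolding G_def G'_def
    by (rule linearization_error_has_vector_derivative) (use F_deriv[OF that] e_def in simp)
  have \<phi>_deriv: "(\<phi> has_real_derivative t * df t - df (\<tau> * t) * t) (at \<tau>)"
    if "\<tau> \<in> {0<..<1}" for \<tau>
    unfolding \<phi>_def
    by (auto intro!: derivative_eq_intros has_real_derivative_scaled_argument[OF f_deriv]
        scaled[OF that])
  have "continuous_on {0..<R} f" by (rule DERIV_continuous_on[OF f_deriv])
  moreover have "(\<lambda>\<tau>. \<tau> * t) ` {0..1} \<subseteq> {0..<R}"
  proof (rule image_subsetI)
    fix \<tau> :: real assume "\<tau> \<in> {0..1}"
    hence "0 \<le> \<tau> * t" "\<tau> * t \<le> t" using t(2) by (auto simp: mult_left_le_one_le)
    thus "\<tau> * t \<in> {0..<R}" using t(3) by simp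
  qed
  ultimately have "continuous_on {0..1} (\<lambda>\<tau>. f (\<tau> * t))"
    by (intro continuous_on_compose2[of _ f _ "\<lambda>\<tau>. \<tau> * t"] continuous_intros)
  hence \<phi>_cont: "continuous_on {0..1} \<phi>" unfolding \<phi>_def by (intro continuous_intros)
  have G_cont: "continuous_on {0..1} G"
    using G_deriv by (intro continuous_at_imp_continuous_on ballI has_vector_derivative_continuous)
  have G'_le: "norm (G' \<tau>) \<le> t * df t - df (\<tau> * t) * t" if "\<tau> \<in> {0..1}" for \<tau>
  proof -
    have "G' \<tau> = - ((K ** (F' x - F' (a + \<tau> *\<^sub>R e))) *v e)"
      unfolding G'_def by (simp add: matrix_vector_mul_assoc[symmetric] algebra_simps)
    hence "norm (G' \<tau>) = norm ((K ** (F' x - F' (a + \<tau> *\<^sub>R e))) *v e)" by simp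
    also have "\<dots> \<le> (df t - df (\<tau> * t)) * norm e"
      by (rule mat_norm_le_imp_norm_le) (use majorant[OF that] e_def in simp)
    finally show ?thesis using t(1) e_def by (simp add: algebra_simps)
  qed
  have "norm (G 1 - G 0) \<le> \<phi> 1 - \<phi> 0"
    by (rule differentiable_bound_general[OF zero_less_one G_cont \<phi>_cont,
          where \<phi>'="\<lambda>\<tau>. t * df t - df (\<tau> * t) * t"])
      (auto intro: G_deriv G'_le simp: \<phi>_deriv has_real_derivative_iff_has_vector_derivative[symmetric])
  thus ?thesis unfolding G_def \<phi>_def e_def using f0 by (simp add: algebra_simps)
qed

lemma perturbation_lower_bound:
  fixes K A0 A :: "real^'n^'n"
  assumes "K ** A0 = mat 1" "mat_norm (K ** (A - A0)) \<le> q"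
  shows "(1 - q) * norm v \<le> norm ((K ** A) *v v)"
proof -
  have "K *v (A0 *v v) = v" using assms(1) by (simp add: matrix_vector_mul_assoc)
  hence "(K ** A) *v v = v + (K ** (A - A0)) *v v"
    by (simp add: matrix_vector_mul_assoc[symmetric] algebra_simps)
  moreover have "norm ((K ** (A - A0)) *v v) \<le> q * norm v"
    using assms(2) by (rule mat_norm_le_imp_norm_le)
  ultimately show ?thesis
    using norm_triangle_ineq4[of "(K ** A) *v v" "(K ** (A - A0)) *v v"] by (simp add: algebra_simps)
qed

lemma invertible_of_perturbation:
  fixes K A0 A :: "real^'n^'n"
  assumes "K ** A0 = mat 1" "mat_norm (K ** (A - A0)) < 1"
  shows "invertible A"
proof -
  have "v = 0" if "A *v v = 0" for v
  proof -
    have "(1 - mat_norm (K ** (A - A0))) * norm v \<le> norm ((K ** A) *v v)"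
      using assms(1) by (rule perturbation_lower_bound) simp
    also have "\<dots> = 0" using that by (simp add: matrix_vector_mul_assoc[symmetric])
    finally show "v = 0" using assms(2) by (simp add: mult_le_0_iff)
  qed
  thus ?thesis using matrix_left_invertible_ker invertible_left_inverse by blast
qed

lemma newton_fun_eq:
  "df t \<noteq> 0 \<Longrightarrow> newton_fun f df t = (t * df t - f t) / df t"
  unfolding newton_fun_def by (simp add: field_simps)

lemma abs_newton_fun_eq:
  assumes "newton_fun f df t \<le> 0" "t \<noteq> 0" "df t \<noteq> 0"
  shows "\<bar>newton_fun f df t\<bar> = t * (f t / (t * df t) - 1)"
proof -
  have "\<bar>newton_fun f df t\<bar> = - newton_fun f df t" using assms(1) by simp
  also have "\<dots> = t * (f t / (t * df t) - 1)"
    using assms(2,3) unfolding newton_fun_def by (simp add: field_simps)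
  finally show ?thesis .
qed

text \<open>The Banach lemma gives \<open>|F'(a)\<^sup>-\<^sup>1 F'(x) v| \<ge> -f'(t) |v|\<close>, and with
  \<open>u = F'(x)\<^sup>-\<^sup>1 F(x)\<close> the vector \<open>F'(a)\<^sup>-\<^sup>1 F'(x) (x - a - u)\<close> is minus the scaled linearization
  error.\<close>
lemma majorant_newton_step_error:
  fixes F :: "real^'n \<Rightarrow> real^'n" and F' :: "real^'n \<Rightarrow> real^'n^'n"
    and f df :: "real \<Rightarrow> real"
  assumes t: "t = norm (x - a)" "0 < t" "t < R"
    and F_deriv: "\<And>\<tau>. \<tau> \<in> {0..1} \<Longrightarrow>
      (F has_derivative (\<lambda>h. F' (a + \<tau> *\<^sub>R (x - a)) *v h)) (at (a + \<tau> *\<^sub>R (x - a)))"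
    and Fa: "F a = 0" and F'a: "invertible (F' a)"
    and f_deriv: "\<And>s. s \<in> {0..<R} \<Longrightarrow> (f has_real_derivative df s) (at s within {0..<R})"
    and f0: "f 0 = 0" and df0: "df 0 = -1" and df_neg: "df t < 0"
    and majorant: "\<And>\<tau>. \<tau> \<in> {0..1} \<Longrightarrow>
      mat_norm (matrix_inv (F' a) ** (F' x - F' (a + \<tau> *\<^sub>R (x - a)))) \<le> df t - df (\<tau> * t)"
  shows "invertible (F' x)" "newton_fun f df t \<le> 0"
    "norm (x - a - matrix_inv (F' x) *v F x) \<le> - newton_fun f df t"
proof -
  define K where "K = matrix_inv (F' a)"
  have K: "K ** F' a = mat 1" unfolding K_def using F'a by (rule matrix_inv_left)
  have K_pert: "mat_norm (K ** (F' x - F' a)) \<le> df t + 1"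
    using majorant[of 0] df0 unfolding K_def by simp
  show F'x: "invertible (F' x)"
    by (rule invertible_of_perturbation[OF K]) (use K_pert df_neg in simp)
  define u where "u = matrix_inv (F' x) *v F x"
  have "(K ** F' x) *v (x - a - u) = - (K *v (F x - F a - F' x *v (x - a)))"
    unfolding u_def using Fa F'x
    by (simp add: matrix_vector_mul_assoc[symmetric] matrix_inv_mult_cancel algebra_simps)
  hence "- df t * norm (x - a - u) \<le> norm (K *v (F x - F a - F' x *v (x - a)))"
    using perturbation_lower_bound[OF K K_pert, of "x - a - u"] by simp
  also have "\<dots> \<le> t * df t - f t"
    by (rule majorant_linearization_bound[OF t F_deriv f_deriv f0 majorant[folded K_def]])
  finally have "- df t * norm (x - a - u) \<le> t * df t - f t" .
  hence "norm (x - a - u) \<le> (t * df t - f t) / - df t"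
    using df_neg by (subst pos_le_divide_eq) (simp_all add: mult.commute)
  moreover have "newton_fun f df t = - ((t * df t - f t) / - df t)"
    using df_neg by (simp add: newton_fun_eq)
  ultimately show "norm (x - a - u) \<le> - newton_fun f df t" "newton_fun f df t \<le> 0"
    using norm_ge_zero[of "x - a - u"] by linarith+
qed

lemma cball_subset_of_less_Sup:
  fixes a :: "'a::metric_space"
  assumes "t < Sup {s \<in> {0..<R}. ball a s \<subseteq> \<Omega>}" "0 < R"
  shows "t < R" "cball a t \<subseteq> \<Omega>"
proof -
  have "0 \<in> {s \<in> {0..<R}. ball a s \<subseteq> \<Omega>}" using assms(2) by simp
  moreover have "bdd_above {s \<in> {0..<R}. ball a s \<subseteq> \<Omega>}" by (rule bdd_aboveI[of _ R]) auto
  ultimately obtain s where s: "s \<in> {0..<R}" "ball a s \<subseteq> \<Omega>" "t < s"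
    using less_cSup_iff[of "{s \<in> {0..<R}. ball a s \<subseteq> \<Omega>}" t] assms(1) by blast
  thus "t < R" by simp
  have "cball a t \<subseteq> ball a s" using s(3) by (auto simp: subset_eq)
  with s(2) show "cball a t \<subseteq> \<Omega>" by blast
qed

lemma neg_below_Sup_neg:
  fixes g :: "real \<Rightarrow> real"
  assumes "mono_on {0..<R} g" "g 0 < 0" "0 < R" "0 \<le> t" "t < Sup {s \<in> {0..<R}. g s < 0}"
  shows "g t < 0"
proof -
  have "0 \<in> {s \<in> {0..<R}. g s < 0}" using assms(2,3) by simp
  moreover have "bdd_above {s \<in> {0..<R}. g s < 0}" by (rule bdd_aboveI[of _ R]) auto
  ultimately obtain s where "s \<in> {0..<R}" "g s < 0" "t < s"
    using less_cSup_iff[of "{s \<in> {0..<R}. g s < 0}" t] assms(5) by blast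
  moreover have "g t \<le> g s" using assms(1,4) \<open>s \<in> {0..<R}\<close> \<open>t < s\<close> by (auto intro: mono_onD)
  ultimately show ?thesis by linarith
qed

lemma Sup_neg_pos:
  fixes g :: "real \<Rightarrow> real"
  assumes "eventually (\<lambda>s. g s < 0) (at_right 0)" "0 < R"
  shows "0 < Sup {s \<in> {0..<R}. g s < 0}"
proof -
  obtain b where b: "b > 0" "\<And>s. 0 < s \<Longrightarrow> s < b \<Longrightarrow> g s < 0"
    using assms(1) by (auto simp: eventually_at_right_field)
  define s where "s = min b R / 2"
  have s: "0 < s" "s < b" "s < R" unfolding s_def using b(1) assms(2) by auto
  hence "s \<in> {s \<in> {0..<R}. g s < 0}" using b(2) by simp
  moreover have "bdd_above {s \<in> {0..<R}. g s < 0}" by (rule bdd_aboveI[of _ R]) auto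
  ultimately have "s \<le> Sup {s \<in> {0..<R}. g s < 0}" by (rule cSup_upper)
  thus ?thesis using s(1) by linarith
qed

lemma property_below_Sup_radius:
  fixes t \<nu> :: real
  assumes "t < Sup {\<delta> \<in> {0<..<\<nu>}. \<forall>s \<in> {0<..<\<delta>}. P s}" "0 < t" "0 < \<nu>"
    and "eventually P (at_right 0)"
  shows "P t" "t < \<nu>"
proof -
  obtain b where b: "b > 0" "\<And>s. 0 < s \<Longrightarrow> s < b \<Longrightarrow> P s"
    using assms(4) by (auto simp: eventually_at_right_field)
  have "min b (\<nu> / 2) \<in> {\<delta> \<in> {0<..<\<nu>}. \<forall>s \<in> {0<..<\<delta>}. P s}"
    using b assms(3) by auto
  moreover have "bdd_above {\<delta> \<in> {0<..<\<nu>}. \<forall>s \<in> {0<..<\<delta>}. P s}"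
    by (rule bdd_aboveI[of _ \<nu>]) auto
  ultimately obtain \<delta> where "\<delta> \<in> {0<..<\<nu>}" "\<forall>s \<in> {0<..<\<delta>}. P s" "t < \<delta>"
    using less_cSup_iff[of "{\<delta> \<in> {0<..<\<nu>}. \<forall>s \<in> {0<..<\<delta>}. P s}" t] assms(1) by blast
  thus "P t" "t < \<nu>" using assms(2) by auto
qed

lemma majorant_eventually_at_right:
  fixes f df :: "real \<Rightarrow> real"
  assumes f_deriv: "\<And>s. s \<in> {0..<R} \<Longrightarrow> (f has_real_derivative df s) (at s within {0..<R})"
    and df_cont: "continuous_on {0..<R} df"
    and "0 < R" "f 0 = 0" "df 0 = -1" "c < 1"
  shows "eventually (\<lambda>s. a * (f s / (s * df s) - 1) + c < 1) (at_right 0)"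
    "eventually (\<lambda>s. df s < 0) (at_right 0)"
proof -
  have "at_right 0 = at (0::real) within {0..R / 2}"
    using at_within_Icc_at_right[of 0 "R / 2"] \<open>0 < R\<close> by simp
  also have "\<dots> \<le> at 0 within {0..<R}" by (rule at_le) (use \<open>0 < R\<close> in auto)
  finally have at_right_le: "at_right 0 \<le> at (0::real) within {0..<R}" .
  have "((\<lambda>s. (f s - f 0) / (s - 0)) \<longlongrightarrow> df 0) (at 0 within {0..<R})"
    using f_deriv[of 0] \<open>0 < R\<close> by (simp add: has_field_derivative_iff)
  hence f_quot: "((\<lambda>s. f s / s) \<longlongrightarrow> -1) (at_right 0)"
    using tendsto_mono[OF at_right_le] assms(4,5) by simp
  have "(df \<longlongrightarrow> df 0) (at 0 within {0..<R})"
    using df_cont \<open>0 < R\<close> unfolding continuous_on_def by simp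
  hence df_lim: "(df \<longlongrightarrow> -1) (at_right 0)"
    using tendsto_mono[OF at_right_le] assms(5) by simp
  have "((\<lambda>s. a * ((f s / s) / df s - 1) + c) \<longlongrightarrow> a * (-1 / -1 - 1) + c) (at_right 0)"
    by (intro tendsto_intros f_quot df_lim) simp
  thus "eventually (\<lambda>s. a * (f s / (s * df s) - 1) + c < 1) (at_right 0)"
    using \<open>c < 1\<close> by (auto dest: order_tendstoD(2))
  show "eventually (\<lambda>s. df s < 0) (at_right 0)"
    using df_lim by (rule order_tendstoD(2)) simp
qed

lemma majorant_below_radius:
  fixes f df :: "real \<Rightarrow> real"
  assumes f_deriv: "\<And>s. s \<in> {0..<R} \<Longrightarrow> (f has_real_derivative df s) (at s within {0..<R})"
    and df_cont: "continuous_on {0..<R} df" and "0 < R" and f0: "f 0 = 0" and df0: "df 0 = -1"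
    and df_mono: "strict_mono_on {0..<R} df" and "c < 1"
    and \<nu>_def: "\<nu> = Sup {t \<in> {0..<R}. df t < 0}"
    and \<rho>_def: "\<rho> = Sup {\<delta> \<in> {0<..<\<nu>}. \<forall>t \<in> {0<..<\<delta>}. a * (f t / (t * df t) - 1) + c < 1}"
    and "0 < t" "t < \<rho>"
  shows "df t < 0" "a * (f t / (t * df t) - 1) + c < 1"
proof -
  note near_zero = majorant_eventually_at_right[OF f_deriv df_cont \<open>0 < R\<close> f0 df0 \<open>c < 1\<close>]
  have "0 < \<nu>" unfolding \<nu>_def using near_zero(2) \<open>0 < R\<close> by (rule Sup_neg_pos)
  from property_below_Sup_radius[OF _ \<open>0 < t\<close> this near_zero(1)] \<open>t < \<rho>\<close>
  have "a * (f t / (t * df t) - 1) + c < 1" and "t < \<nu>" unfolding \<rho>_def by blast+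
  thus "a * (f t / (t * df t) - 1) + c < 1" by simp
  show "df t < 0"
    using neg_below_Sup_neg[OF strict_mono_on_imp_mono_on[OF df_mono]] df0 \<open>0 < R\<close> \<open>0 < t\<close>
      \<open>t < \<nu>\<close> unfolding \<nu>_def by simp
qed

lemma residual_preimage_bound:
  fixes P A :: "real^'n^'n"
  assumes P: "invertible P" and A: "invertible A"
    and res: "norm (P *v r) \<le> \<eta> * norm (P *v b)"
    and \<eta>: "0 \<le> \<eta> * cond_num (P ** A)" "\<eta> * cond_num (P ** A) \<le> vt"
  shows "norm (matrix_inv A *v r) \<le> vt * norm (matrix_inv A *v b)"
proof -
  define N where "N = P ** A"
  have N: "invertible N" unfolding N_def using P A by (rule invertible_mult)
  have "0 \<le> \<eta>" using \<eta>(1) cond_num_ge_1[OF N] unfolding N_def by (simp add: zero_le_mult_iff)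
  have "N *v (matrix_inv A *v r) = P *v r"
    unfolding N_def by (simp add: matrix_vector_mul_assoc[symmetric] matrix_inv_mult_cancel A)
  hence "matrix_inv A *v r = matrix_inv N *v (P *v r)"
    by (metis N matrix_inv_mult_cancel(2))
  hence "norm (matrix_inv A *v r) \<le> mat_norm (matrix_inv N) * norm (P *v r)"
    by (simp add: mat_norm_bound)
  also have "\<dots> \<le> mat_norm (matrix_inv N) * (\<eta> * (mat_norm N * norm (matrix_inv A *v b)))"
  proof (intro mult_left_mono mat_norm_nonneg)
    have "P *v b = N *v (matrix_inv A *v b)"
      unfolding N_def by (simp add: matrix_vector_mul_assoc[symmetric] matrix_inv_mult_cancel A)
    thus "norm (P *v r) \<le> \<eta> * (mat_norm N * norm (matrix_inv A *v b))"
      using res mat_norm_bound[of N] \<open>0 \<le> \<eta>\<close> by (metis mult_left_mono order_trans)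
  qed
  also have "\<dots> = \<eta> * cond_num (P ** A) * norm (matrix_inv A *v b)"
    unfolding cond_num_def N_def by (simp add: algebra_simps)
  also have "\<dots> \<le> vt * norm (matrix_inv A *v b)" using \<eta>(2) by (rule mult_right_mono) simp
  finally show ?thesis .
qed

text \<open>With \<open>u = A\<^sup>-\<^sup>1 b\<close>, \<open>w = A\<^sup>-\<^sup>1 r\<close> and \<open>Q = M\<^sup>-\<^sup>1 A\<close>, the step is \<open>s = Q (w - u)\<close> and
  \<open>e + s = Q (e - u) - (Q - I) e + Q w\<close>.\<close>
lemma inexact_newton_step_bounds:
  fixes M A :: "real^'n^'n"
  assumes M: "invertible M" and A: "invertible A"
    and \<omega>1: "mat_norm (matrix_inv M ** A) \<le> \<omega>1"
    and \<omega>2: "mat_norm (matrix_inv M ** A - mat 1) \<le> \<omega>2"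
    and step: "M *v s = - b + r"
    and res: "norm (matrix_inv A *v r) \<le> vt * norm (matrix_inv A *v b)" and "0 \<le> vt"
    and err: "norm (e - matrix_inv A *v b) \<le> N"
  shows "norm (e + s) \<le> \<omega>1 * (1 + vt) * N + (\<omega>1 * vt + \<omega>2) * norm e"
    and "norm s \<le> \<omega>1 * (1 + vt) * (N + norm e)"
proof -
  define u w Q where "u = matrix_inv A *v b" and "w = matrix_inv A *v r"
    and "Q = matrix_inv M ** A"
  have "\<omega>1 \<ge> 0" using \<omega>1 mat_norm_nonneg order_trans by blast
  have Q: "norm (Q *v v) \<le> \<omega>1 * norm v" for v
    unfolding Q_def using \<omega>1 by (rule mat_norm_le_imp_norm_le)
  have "M *v (Q *v (w - u)) = M *v s"
    unfolding Q_def u_def w_def step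
    by (simp add: matrix_vector_mul_assoc[symmetric] matrix_inv_mult_cancel M A algebra_simps)
  hence s: "s = Q *v (w - u)" by (metis M matrix_inv_mult_cancel(2))
  have u: "norm u \<le> N + norm e"
    using err norm_triangle_ineq3[of e u] unfolding u_def by linarith
  have w: "norm w \<le> vt * (N + norm e)"
    using res u \<open>0 \<le> vt\<close> unfolding u_def w_def by (meson mult_left_mono order_trans)
  have "e + s = Q *v (e - u) - (Q - mat 1) *v e + Q *v w"
    unfolding s by (simp add: algebra_simps)
  hence "norm (e + s) \<le> norm (Q *v (e - u) - (Q - mat 1) *v e) + norm (Q *v w)"
    by (metis norm_triangle_ineq)
  also have "\<dots> \<le> norm (Q *v (e - u)) + norm ((Q - mat 1) *v e) + norm (Q *v w)"
    using norm_triangle_ineq4 by (rule add_right_mono)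
  also have "\<dots> \<le> \<omega>1 * N + \<omega>2 * norm e + \<omega>1 * (vt * (N + norm e))"
  proof (intro add_mono)
    show "norm (Q *v (e - u)) \<le> \<omega>1 * N"
      using Q[of "e - u"] mult_left_mono[OF err \<open>\<omega>1 \<ge> 0\<close>] unfolding u_def by linarith
    show "norm ((Q - mat 1) *v e) \<le> \<omega>2 * norm e"
      using \<omega>2 unfolding Q_def by (rule mat_norm_le_imp_norm_le)
    show "norm (Q *v w) \<le> \<omega>1 * (vt * (N + norm e))"
      using Q[of w] mult_left_mono[OF w \<open>\<omega>1 \<ge> 0\<close>] by linarith
  qed
  finally show "norm (e + s) \<le> \<omega>1 * (1 + vt) * N + (\<omega>1 * vt + \<omega>2) * norm e"
    by (simp add: algebra_simps)
  have "norm s \<le> \<omega>1 * (norm w + norm u)"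
    unfolding s using Q[of "w - u"] norm_triangle_ineq4[of w u] \<open>\<omega>1 \<ge> 0\<close>
    by (meson mult_left_mono order_trans)
  also have "\<dots> \<le> \<omega>1 * ((1 + vt) * (N + norm e))"
    using u w \<open>\<omega>1 \<ge> 0\<close> by (intro mult_left_mono) (auto simp: algebra_simps)
  finally show "norm s \<le> \<omega>1 * (1 + vt) * (N + norm e)" by (simp add: mult.assoc)
qed

lemma inexact_newton_CondG_estimate:
  fixes M A :: "real^'n^'n"
  assumes M: "invertible M" and A: "invertible A"
    and \<omega>1: "mat_norm (matrix_inv M ** A) \<le> \<omega>1"
    and \<omega>2: "mat_norm (matrix_inv M ** A - mat 1) \<le> \<omega>2"
    and step: "M *v s = - b + r"
    and res: "norm (matrix_inv A *v r) \<le> vt * norm (matrix_inv A *v b)" and "0 \<le> vt"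
    and err: "norm (x - xs - matrix_inv A *v b) \<le> N"
    and next_it: "CondG_output C (x + s) x (\<theta> * (norm s)\<^sup>2) x'" and "xs \<in> C" and "0 \<le> \<theta>"
  shows "norm (x' - xs) \<le> \<omega>1 * (1 + vt) * (1 + sqrt (2 * \<theta>)) * N
           + (\<omega>1 * ((1 + vt) * sqrt (2 * \<theta>) + vt) + \<omega>2) * norm (x - xs)"
proof -
  note bounds = inexact_newton_step_bounds[OF M A \<omega>1 \<omega>2 step res \<open>0 \<le> vt\<close> err]
  have projection: "norm (x' - xs) \<le> norm (x + s - xs) + sqrt (\<theta> * (norm s)\<^sup>2)"
    using CondG_output_dist_le[OF next_it \<open>xs \<in> C\<close>] \<open>0 \<le> \<theta>\<close> by simp
  have newton_point: "norm (x + s - xs) \<le> \<omega>1 * (1 + vt) * N + (\<omega>1 * vt + \<omega>2) * norm (x - xs)"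
    using bounds(1) by (simp add: algebra_simps)
  have "sqrt (\<theta> * (norm s)\<^sup>2) = sqrt \<theta> * norm s" by (simp add: real_sqrt_mult)
  also have "\<dots> \<le> sqrt (2 * \<theta>) * norm s"
    by (intro mult_right_mono real_sqrt_le_mono) (use \<open>0 \<le> \<theta>\<close> in auto)
  also have "\<dots> \<le> sqrt (2 * \<theta>) * (\<omega>1 * (1 + vt) * (N + norm (x - xs)))"
    using bounds(2) by (rule mult_left_mono) (simp add: \<open>0 \<le> \<theta>\<close>)
  finally show ?thesis using projection newton_point by (simp add: algebra_simps)
qed

text \<open>The bound is increasing in \<open>\<theta>\<close>; at \<open>\<theta> = \<lambda>\<^sup>2/2\<close> it is \<open>t\<close> times the expression
  that the definition of \<open>\<rho>\<close> bounds by \<open>1\<close>.\<close>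
lemma majorant_estimate_less:
  assumes "0 \<le> \<theta>" "\<theta> \<le> lam\<^sup>2 / 2" "0 \<le> lam" "0 \<le> \<omega>1" "0 \<le> vt" "0 < t" "df t \<noteq> 0"
    and "newton_fun f df t \<le> 0"
    and radius: "\<omega>1 * (1 + vt) * (1 + lam) * (f t / (t * df t) - 1)
      + (\<omega>1 * ((1 + vt) * lam + vt) + \<omega>2) < 1"
  shows "\<omega>1 * (1 + vt) * (1 + sqrt (2 * \<theta>)) * \<bar>newton_fun f df t\<bar>
      + (\<omega>1 * ((1 + vt) * sqrt (2 * \<theta>) + vt) + \<omega>2) * t < t"
proof -
  define n S where "n = \<bar>newton_fun f df t\<bar>" and "S = sqrt (2 * \<theta>)"
  have n: "n = t * (f t / (t * df t) - 1)"
    unfolding n_def using assms(6-8) by (intro abs_newton_fun_eq) auto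
  have "S \<le> lam"
    unfolding S_def using assms(2,3) real_sqrt_le_mono[of "2 * \<theta>" "lam\<^sup>2"] by simp
  have "\<omega>1 * (1 + vt) * (1 + S) * n + (\<omega>1 * ((1 + vt) * S + vt) + \<omega>2) * t
      = \<omega>1 * (1 + vt) * (n + t) * S + \<omega>1 * (1 + vt) * n + (\<omega>1 * vt + \<omega>2) * t"
    by (simp add: algebra_simps)
  also have "\<dots> \<le> \<omega>1 * (1 + vt) * (n + t) * lam + \<omega>1 * (1 + vt) * n + (\<omega>1 * vt + \<omega>2) * t"
    using \<open>S \<le> lam\<close> assms(4-6) by (intro add_right_mono mult_left_mono) (auto simp: n_def)
  also have "\<dots> = t * (\<omega>1 * (1 + vt) * (1 + lam) * (f t / (t * df t) - 1)
      + (\<omega>1 * ((1 + vt) * lam + vt) + \<omega>2))"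
    unfolding n by (simp add: algebra_simps)
  also have "\<dots> < t" using radius \<open>0 < t\<close> by simp
  finally show ?thesis unfolding n_def S_def .
qed

theorem lemma3:
  fixes \<Omega> C :: "(real^'n) set"
    and F :: "real^'n \<Rightarrow> real^'n"
    and F' :: "real^'n \<Rightarrow> real^'n^'n"
    and xs :: "real^'n"
    and R \<kappa> \<nu> \<rho> \<sigma> :: real
    and f df :: "real \<Rightarrow> real"
    and vt \<omega>1 \<omega>2 lam :: real
    and x y s r x' :: "real^'n"
    and M P :: "real^'n^'n"
    and \<eta> \<theta> :: real
  assumes \<Omega>_open: "open \<Omega>"
    and F_deriv: "\<And>z. z \<in> \<Omega> \<Longrightarrow> (F has_derivative (\<lambda>h. F' z *v h)) (at z)"
    and F'_cont: "continuous_on \<Omega> F'"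
    and C_sub: "C \<subseteq> \<Omega>" and C_convex: "convex C" and C_compact: "compact C" and C_ne: "C \<noteq> {}"
    and xs_C: "xs \<in> C" and F_xs: "F xs = 0" and F'_xs_inv: "invertible (F' xs)"
    and R_pos: "R > 0"
    and \<kappa>_def: "\<kappa> = Sup {t \<in> {0..<R}. ball xs t \<subseteq> \<Omega>}"
    and f_deriv: "\<And>t. t \<in> {0..<R} \<Longrightarrow> (f has_real_derivative df t) (at t within {0..<R})"
    and df_cont: "continuous_on {0..<R} df"
    and majorant: "\<And>\<tau> z. \<tau> \<in> {0..1} \<Longrightarrow> z \<in> ball xs \<kappa> \<Longrightarrow>
        mat_norm (matrix_inv (F' xs) ** (F' z - F' (xs + \<tau> *\<^sub>R (z - xs))))
          \<le> df (norm (z - xs)) - df (\<tau> * norm (z - xs))"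
    and h1: "f 0 = 0" "df 0 = -1"
    and h2: "strict_mono_on {0..<R} df"
    and vt_rng: "0 \<le> vt" "vt < 1"
    and \<omega>_rng: "0 \<le> \<omega>2" "\<omega>2 < \<omega>1" "\<omega>1 * vt + \<omega>2 < 1"
    and lam_rng: "0 \<le> lam" "lam < (1 - \<omega>2 - \<omega>1 * vt) / (\<omega>1 * (1 + vt))"
    and \<nu>_def: "\<nu> = Sup {t \<in> {0..<R}. df t < 0}"
    and \<rho>_def: "\<rho> = Sup {\<delta> \<in> {0<..<\<nu>}. \<forall>t \<in> {0<..<\<delta>}.
        \<omega>1 * (1 + vt) * (1 + lam) * (f t / (t * df t) - 1)
          + \<omega>1 * ((1 + vt) * lam + vt) + \<omega>2 < 1}"
    and \<sigma>_def: "\<sigma> = min \<kappa> \<rho>"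
    and x_C: "x \<in> C" and x_ball: "x \<in> ball xs \<sigma>" and x_ne: "x \<noteq> xs"
    and Fx_ne: "F x \<noteq> 0"
    and M_inv: "invertible M"
    and M1: "mat_norm (matrix_inv M ** F' x) \<le> \<omega>1"
    and M2: "mat_norm (matrix_inv M ** F' x - mat 1) \<le> \<omega>2"
    and step: "M *v s = - F x + r" and y_def: "y = x + s"
    and P_inv: "invertible P"
    and res: "norm (P *v r) \<le> \<eta> * norm (P *v F x)"
    and \<eta>_rng: "0 \<le> \<eta> * cond_num (P ** F' x)" "\<eta> * cond_num (P ** F' x) \<le> vt"
    and \<theta>_nonneg: "\<theta> \<ge> 0"
    and next_it: "CondG_output C y x (\<theta> * (norm s)\<^sup>2) x'"
  shows "norm (x' - xs) \<le> \<omega>1 * (1 + vt) * (1 + sqrt (2 * \<theta>)) * \<bar>newton_fun f df (norm (x - xs))\<bar>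
            + (\<omega>1 * ((1 + vt) * sqrt (2 * \<theta>) + vt) + \<omega>2) * norm (x - xs)
       \<and> (\<theta> \<le> lam\<^sup>2 / 2 \<longrightarrow> norm (x' - xs) < norm (x - xs))"
proof -
  define t where "t = norm (x - xs)"
  have t: "0 < t" "t < \<kappa>" "t < \<rho>"
    using x_ne x_ball \<sigma>_def by (auto simp: t_def dist_norm norm_minus_commute)
  obtain "t < R" and cball_sub: "cball xs t \<subseteq> \<Omega>"
    using cball_subset_of_less_Sup t(2) R_pos unfolding \<kappa>_def by blast
  have "0 < \<omega>1 * (1 + vt)" using \<omega>_rng vt_rng by simp
  hence "\<omega>1 * ((1 + vt) * lam + vt) + \<omega>2 < 1"
    using lam_rng(2) by (simp add: pos_less_divide_eq algebra_simps)
  note radius = majorant_below_radius[OF f_deriv df_cont R_pos h1 h2 this \<nu>_def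
      \<rho>_def[unfolded add.assoc] t(1,3)]
  have F_seg: "(F has_derivative (\<lambda>h. F' (xs + \<tau> *\<^sub>R (x - xs)) *v h)) (at (xs + \<tau> *\<^sub>R (x - xs)))"
    if "\<tau> \<in> {0..1}" for \<tau>
    using that cball_sub t(1) by (intro F_deriv) (auto simp: dist_norm t_def mult_left_le_one_le)
  have newton: "invertible (F' x)" "newton_fun f df t \<le> 0"
      "norm (x - xs - matrix_inv (F' x) *v F x) \<le> - newton_fun f df t"
    using majorant_newton_step_error[where F = F and F' = F' and a = xs,
        OF t_def t(1) \<open>t < R\<close> _ F_xs F'_xs_inv f_deriv h1 radius(1)] F_seg
      majorant[of _ x, folded t_def] x_ball \<sigma>_def by auto
  note estimate = inexact_newton_CondG_estimate[OF M_inv newton(1) M1 M2 step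
      residual_preimage_bound[OF P_inv newton(1) res \<eta>_rng] vt_rng(1)
      newton(3)[folded abs_of_nonpos[OF newton(2)]] next_it[unfolded y_def] xs_C \<theta>_nonneg]
  show ?thesis
    using estimate \<omega>_rng radius(1)
      majorant_estimate_less[OF \<theta>_nonneg _ lam_rng(1) _ vt_rng(1) t(1) _ newton(2) radius(2)]
    unfolding t_def by auto
qed

end
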